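(* Let $n\ge 1$ and let $a_i=F_{i+2}-i-2$ for $i\ge 1$. Every game path of the Zeckendorf game on $n$ (starting from $\{F_1^n\}$) has length at most $\sum_{i=1}^{i_{\max}(n)} a_i\,\delta_i$, and $$\sum_{i=1}^{i_{\max}(n)} a_i\,\delta_i\ \le\ \frac{3+\sqrt5}{2}\,n-IZ(n)-\frac{1+\sqrt5}{2}\,Z(n).$$
   Context: Fibonacci numbers are indexed by $F_1=1$, $F_2=2$, $F_{i+1}=F_i+F_{i-1}$. A game state is a finite multiset of Fibonacci numbers (tracked by index); $\{F_1^n\}$ denotes $n$ copies of $F_1$. The legal moves are: $C_1$: replace $F_1,F_1$ by $F_2$; for $i\ge 2$, $C_i$: replace $F_{i-1},F_i$ by $F_{i+1}$; $S_2$: replace $F_2,F_2$ by $F_1,F_3$; for $i\ge 3$, $S_i$: replace $F_i,F_i$ by $F_{i-2},F_{i+1}$. The game on $n$ starts at $\{F_1^n\}$ and a game path is a sequence of legal moves continued until no legal move is available, which happens exactly at the Zeckendorf decomposition of $n$ (the unique representation of $n$ as a sum of $F_i$'s with distinct, pairwise non-consecutive indices); the length of a path is its number of moves. Write the Zeckendorf decomposition as $n=\sum_{i=1}^{i_{\max}(n)}\delta_i F_i$ with $\delta_i\in\{0,1\}$ and $i_{\max}(n)$ the largest index occurring; $Z(n)=\sum_i\delta_i$ and $IZ(n)=\sum_i i\,\delta_i$. *)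

theory Defs
  imports Complex_Main "HOL-Library.Multiset"
begin

text \<open>Fibonacci numbers with the paper's indexing: F 1 = 1, F 2 = 2, F (i+1) = F i + F (i-1).
  Index 0 is unused (value irrelevant).\<close>
fun F :: "nat \<Rightarrow> nat" where
  "F 0 = 1"
| "F (Suc 0) = 1"
| "F (Suc (Suc 0)) = 2"
| "F (Suc (Suc (Suc i))) = F (Suc (Suc i)) + F (Suc i)"

text \<open>A game state is a multiset of Fibonacci indices. One legal move.\<close>
definition zmove :: "nat multiset \<Rightarrow> nat multiset \<Rightarrow> bool" where
  "zmove A B \<longleftrightarrow>
     ({#1, 1#} \<subseteq># A \<and> B = A - {#1, 1#} + {#2#})
   \<or> (\<exists>i\<ge>2. {#i - 1, i#} \<subseteq># A \<and> B = A - {#i - 1, i#} + {#i + 1#})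
   \<or> ({#2, 2#} \<subseteq># A \<and> B = A - {#2, 2#} + {#1, 3#})
   \<or> (\<exists>i\<ge>3. {#i, i#} \<subseteq># A \<and> B = A - {#i, i#} + {#i - 2, i + 1#})"

text \<open>A game path on n: the list of successive states, starting at {F_1^n},
  each step a legal move, ending when no legal move is available.
  Its length (number of moves) is length ss - 1.\<close>
definition game_path :: "nat \<Rightarrow> nat multiset list \<Rightarrow> bool" where
  "game_path n ss \<longleftrightarrow> ss \<noteq> [] \<and> hd ss = replicate_mset n 1
     \<and> (\<forall>k. Suc k < length ss \<longrightarrow> zmove (ss ! k) (ss ! Suc k))
     \<and> \<not> (\<exists>B. zmove (last ss) B)"

definition zeck :: "nat \<Rightarrow> nat set" where
  "zeck n = (THE S. finite S \<and> 0 \<notin> S \<and> (\<forall>i\<in>S. Suc i \<notin> S) \<and> (\<Sum>i\<in>S. F i) = n)"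

definition delta :: "nat \<Rightarrow> nat \<Rightarrow> nat" where
  "delta n i = (if i \<in> zeck n then 1 else 0)"

definition imax :: "nat \<Rightarrow> nat" where
  "imax n = Max (zeck n)"

definition Z :: "nat \<Rightarrow> nat" where
  "Z n = (\<Sum>i\<in>{1..imax n}. delta n i)"

definition IZ :: "nat \<Rightarrow> nat" where
  "IZ n = (\<Sum>i\<in>{1..imax n}. i * delta n i)"

definition a :: "nat \<Rightarrow> int" where
  "a i = int (F (i + 2)) - int i - 2"

end

(* Give a state the potential sum of a_i over its entries.  A legal move raises the potential
   by at least one and preserves the Fibonacci value, so a path of length k ends in a state of
   potential at least k; a state admitting no move has distinct, non-consecutive indices, i.e.
   it is the Zeckendorf decomposition of n, whose potential is the sum of a_i delta_i.  For the
   second bound, F_(i+2) = phi^2 F_i + psi^(i+1) with psi = (1 - sqrt 5)/2, and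
   psi^(i+1) <= psi^2 = 2 - phi for i >= 1, so a_i <= phi^2 F_i - i - phi; summing over the
   Zeckendorf decomposition gives the claim. *)

theory Submission
  imports Defs
begin

lemma F_Suc_Suc: "F (Suc (Suc k)) = F (Suc k) + F k"
  by (cases k rule: F.cases) auto

lemma F_pos: "F i \<ge> 1"
  by (induction i rule: F.induct) auto

lemma F_mono: "i \<le> j \<Longrightarrow> F i \<le> F j"
proof (induction j rule: dec_induct)
  case (step j)
  then show ?case by (cases j) (auto simp: F_Suc_Suc)
qed simp

definition zeckendorf_set :: "nat \<Rightarrow> nat set \<Rightarrow> bool" where
  "zeckendorf_set n S \<longleftrightarrow> finite S \<and> 0 \<notin> S \<and> (\<forall>i\<in>S. Suc i \<notin> S) \<and> (\<Sum>i\<in>S. F i) = n"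

lemma sum_F_less_F_Suc:
  assumes "S \<subseteq> {1..m}" "\<forall>i\<in>S. Suc i \<notin> S"
  shows "(\<Sum>i\<in>S. F i) < F (Suc m)"
  using assms
proof (induction m arbitrary: S rule: less_induct)
  case (less m)
  show ?case
  proof (cases "m \<in> S")
    case True
    then obtain k where m: "m = Suc k" using less.prems(1) by (cases m) auto
    have "S - {m} \<subseteq> {1..k - 1}"
    proof
      fix i assume i: "i \<in> S - {m}"
      then have "i \<noteq> k" using less.prems(2) True m by auto
      moreover have "i \<in> {1..Suc k}" using i less.prems(1) m by auto
      ultimately show "i \<in> {1..k - 1}" using i m by auto
    qed
    then have "(\<Sum>i\<in>S - {m}. F i) < F (Suc (k - 1))"
      using less.IH[of "k - 1"] less.prems(2) m by auto
    moreover have "F (Suc (k - 1)) = F k" by (cases k) simp_all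
    moreover have "(\<Sum>i\<in>S. F i) = F m + (\<Sum>i\<in>S - {m}. F i)"
      using True less.prems(1) by (simp add: sum.remove finite_subset)
    ultimately show ?thesis using m F_Suc_Suc[of k] by simp
  next
    case False
    show ?thesis
    proof (cases m)
      case 0
      then show ?thesis using less.prems(1) by simp
    next
      case (Suc k)
      then have "(\<Sum>i\<in>S. F i) < F m"
        using less.IH[of k S] less.prems False by (auto simp: subset_iff le_Suc_eq)
      then show ?thesis using F_mono[of m "Suc m"] by simp
    qed
  qed
qed

lemma zeckendorf_set_subset_Max: "zeckendorf_set n S \<Longrightarrow> S \<subseteq> {1..Max S}"
  by (auto simp: zeckendorf_set_def Suc_le_eq intro!: gr0I)

lemma zeckendorf_set_Max_bounds:
  assumes "zeckendorf_set n S" "S \<noteq> {}"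
  shows "F (Max S) \<le> n" "n < F (Suc (Max S))"
proof -
  have S: "finite S" "0 \<notin> S" "\<forall>i\<in>S. Suc i \<notin> S" "(\<Sum>i\<in>S. F i) = n"
    using assms(1) by (auto simp: zeckendorf_set_def)
  show "F (Max S) \<le> n"
    using S(1,4) assms(2) by (metis Max_in member_le_sum zero_le)
  show "n < F (Suc (Max S))"
    using sum_F_less_F_Suc zeckendorf_set_subset_Max[OF assms(1)] S(3,4) by blast
qed

lemma F_bracket_unique:
  assumes "F i \<le> n" "n < F (Suc i)" "F j \<le> n" "n < F (Suc j)"
  shows "i = j"
proof (rule ccontr)
  assume "i \<noteq> j"
  then have "Suc i \<le> j \<or> Suc j \<le> i" by linarith
  then show False
    using F_mono[of "Suc i" j] F_mono[of "Suc j" i] assms by auto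
qed

lemma zeckendorf_set_remove_Max:
  assumes "zeckendorf_set n S" "S \<noteq> {}"
  shows "zeckendorf_set (n - F (Max S)) (S - {Max S})"
  using assms sum.remove[of S "Max S" F] by (auto simp: zeckendorf_set_def)

lemma zeckendorf_set_unique: "zeckendorf_set n S \<Longrightarrow> zeckendorf_set n T \<Longrightarrow> S = T"
proof (induction n arbitrary: S T rule: less_induct)
  case (less n)
  have empty_iff: "U = {} \<longleftrightarrow> n = 0" if "zeckendorf_set n U" for U
    using that by (auto simp: zeckendorf_set_def) (metis F_pos not_one_le_zero)
  show ?case
  proof (cases "n = 0")
    case True
    then show ?thesis using empty_iff less.prems by blast
  next
    case False
    then have ne: "S \<noteq> {}" "T \<noteq> {}" using empty_iff less.prems by blast+
    have max_eq: "Max S = Max T"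
      using F_bracket_unique zeckendorf_set_Max_bounds less.prems ne by metis
    have "n - F (Max S) < n" using False F_pos[of "Max S"] by simp
    then have "S - {Max S} = T - {Max T}"
      using less.IH zeckendorf_set_remove_Max less.prems ne max_eq by metis
    then show ?thesis
      using max_eq ne less.prems by (metis Max_in insert_Diff zeckendorf_set_def)
  qed
qed

lemma zeck_eqI: "zeckendorf_set n S \<Longrightarrow> zeck n = S"
  unfolding zeck_def
  by (rule the_equality) (auto simp: zeckendorf_set_unique zeckendorf_set_def[symmetric])

(* C_1 and every S_i raise the potential by exactly 1, C_i raises it by i. *)
definition potential :: "nat multiset \<Rightarrow> int" where
  "potential A = (\<Sum>i\<in>#A. a i)"

definition fib_sum :: "nat multiset \<Rightarrow> nat" where
  "fib_sum A = (\<Sum>i\<in>#A. F i)"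

lemma sum_mset_image_replace:
  fixes f :: "nat \<Rightarrow> 'b::comm_monoid_add"
  assumes "M \<subseteq># A"
  shows "(\<Sum>i\<in>#A - M + N. f i) + (\<Sum>i\<in>#M. f i) = (\<Sum>i\<in>#A. f i) + (\<Sum>i\<in>#N. f i)"
proof -
  have "A = (A - M) + M" using assms by simp
  then have "(\<Sum>i\<in>#A. f i) = (\<Sum>i\<in>#A - M. f i) + (\<Sum>i\<in>#M. f i)"
    by (metis image_mset_union sum_mset.union)
  then show ?thesis by (simp add: algebra_simps)
qed

lemma zmove_invariants:
  assumes "zmove A B" "0 \<notin># A"
  shows "potential A < potential B \<and> fib_sum B = fib_sum A \<and> 0 \<notin># B"
  using assms(1) unfolding zmove_def
proof (elim disjE exE conjE)
  assume h: "{#1, 1#} \<subseteq># A" "B = A - {#1, 1#} + {#2#}"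
  show ?thesis
    using sum_mset_image_replace[OF h(1), of a "{#2#}"] sum_mset_image_replace[OF h(1), of F "{#2#}"] h assms(2)
    by (auto simp: potential_def fib_sum_def a_def numeral_eq_Suc in_diff_count)
next
  fix i assume h: "i \<ge> 2" "{#i - 1, i#} \<subseteq># A" "B = A - {#i - 1, i#} + {#i + 1#}"
  obtain k where k: "i = Suc (Suc k)" using h(1) by (intro that[of "i - 2"]) simp
  show ?thesis
    using sum_mset_image_replace[OF h(2), of a "{#i + 1#}"] sum_mset_image_replace[OF h(2), of F "{#i + 1#}"] h assms(2)
    by (auto simp: potential_def fib_sum_def a_def k in_diff_count)
next
  assume h: "{#2, 2#} \<subseteq># A" "B = A - {#2, 2#} + {#1, 3#}"
  show ?thesis
    using sum_mset_image_replace[OF h(1), of a "{#1, 3#}"] sum_mset_image_replace[OF h(1), of F "{#1, 3#}"] h assms(2)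
    by (auto simp: potential_def fib_sum_def a_def numeral_eq_Suc in_diff_count)
next
  fix i assume h: "i \<ge> 3" "{#i, i#} \<subseteq># A" "B = A - {#i, i#} + {#i - 2, i + 1#}"
  obtain k where k: "i = Suc (Suc (Suc k))" using h(1) by (intro that[of "i - 3"]) simp
  show ?thesis
    using sum_mset_image_replace[OF h(2), of a "{#i - 2, i + 1#}"] sum_mset_image_replace[OF h(2), of F "{#i - 2, i + 1#}"] h assms(2)
    by (auto simp: potential_def fib_sum_def a_def k in_diff_count)
qed

lemma game_path_invariants:
  assumes "game_path n ss" "k < length ss"
  shows "int k \<le> potential (ss ! k) \<and> fib_sum (ss ! k) = n \<and> 0 \<notin># ss ! k"
  using assms(2)
proof (induction k)
  case 0
  have "ss ! 0 = replicate_mset n 1" using assms(1) unfolding game_path_def by (metis hd_conv_nth)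
  then show ?case by (simp add: potential_def fib_sum_def a_def numeral_eq_Suc)
next
  case (Suc k)
  have "zmove (ss ! k) (ss ! Suc k)" using assms(1) Suc.prems unfolding game_path_def by blast
  with zmove_invariants Suc show ?case by fastforce
qed

lemma no_zmove_count_le_1:
  assumes "\<nexists>B. zmove L B" "0 \<notin># L"
  shows "count L x \<le> 1"
proof (rule ccontr)
  assume "\<not> count L x \<le> 1"
  then have "2 \<le> count L x" by simp
  then have xx: "{#x, x#} \<subseteq># L" by (auto simp: subseteq_mset_def)
  have "x \<in># L" using \<open>2 \<le> count L x\<close> by (auto intro: count_inI)
  then have "x \<noteq> 0" using assms(2) by metis
  then consider "x = 1" | "x = 2" | "x \<ge> 3" by linarith
  then show False
  proof cases
    case 1
    then have "zmove L (L - {#1, 1#} + {#2#})" using xx by (simp add: zmove_def)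
    with assms(1) show False by blast
  next
    case 2
    then have "zmove L (L - {#2, 2#} + {#1, 3#})" using xx by (simp add: zmove_def)
    with assms(1) show False by blast
  next
    case 3
    then have "zmove L (L - {#x, x#} + {#x - 2, x + 1#})" using xx by (auto simp: zmove_def)
    with assms(1) show False by blast
  qed
qed

lemma no_zmove_not_adjacent:
  assumes "\<nexists>B. zmove L B" "0 \<notin># L" "i \<in># L"
  shows "Suc i \<notin># L"
proof
  assume "Suc i \<in># L"
  moreover have "i \<noteq> 0" using assms(2,3) by metis
  ultimately have "zmove L (L - {#i, Suc i#} + {#Suc i + 1#})"
    using assms(3) unfolding zmove_def by (intro disjI2 disjI1 exI[of _ "Suc i"]) (auto simp: subseteq_mset_def)
  with assms(1) show False by blast
qed

lemma mset_set_set_mset_eq: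
  assumes "\<And>x. count A x \<le> 1"
  shows "mset_set (set_mset A) = A"
proof (rule multiset_eqI)
  fix x
  show "count (mset_set (set_mset A)) x = count A x"
    using assms[of x] by (cases "x \<in># A") (auto simp: le_Suc_eq count_eq_zero_iff)
qed

lemma terminal_state_zeckendorf:
  assumes "\<nexists>B. zmove L B" "0 \<notin># L"
  shows "zeckendorf_set (fib_sum L) (set_mset L)" "potential L = (\<Sum>i\<in>set_mset L. a i)"
proof -
  have L: "mset_set (set_mset L) = L"
    using mset_set_set_mset_eq no_zmove_count_le_1[OF assms] by blast
  show "zeckendorf_set (fib_sum L) (set_mset L)"
    using assms no_zmove_not_adjacent L
    by (auto simp: zeckendorf_set_def fib_sum_def sum_unfold_sum_mset)
  show "potential L = (\<Sum>i\<in>set_mset L. a i)"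
    using L by (simp add: potential_def sum_unfold_sum_mset)
qed

lemma fibonacci_recurrence_unique:
  fixes u v :: "nat \<Rightarrow> 'a::semiring"
  assumes "\<And>k. u (Suc (Suc k)) = u (Suc k) + u k" "\<And>k. v (Suc (Suc k)) = v (Suc k) + v k"
    and "u 0 = v 0" "u 1 = v 1"
  shows "u k = v k"
proof -
  have "u k = v k \<and> u (Suc k) = v (Suc k)"
    by (induction k) (simp_all add: assms(1-3) assms(4)[unfolded One_nat_def])
  then show ?thesis ..
qed

lemma power_Suc_Suc_eq_if_sq_eq:
  fixes r :: "'a::comm_semiring_1"
  assumes "r ^ 2 = r + 1"
  shows "r ^ Suc (Suc k) = r ^ Suc k + r ^ k"
proof -
  have "r ^ Suc (Suc k) = r ^ k * r ^ 2" by (simp add: power2_eq_square algebra_simps)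
  also have "\<dots> = r ^ Suc k + r ^ k" by (simp only: assms) (simp add: algebra_simps)
  finally show ?thesis .
qed

lemma golden_conj_sq: "((1 - sqrt 5) / 2) ^ 2 = (1 - sqrt 5) / 2 + (1::real)"
  by (simp add: power2_eq_square field_simps)

lemma F_Suc_Suc_golden:
  "real (F (Suc (Suc i))) = (3 + sqrt 5) / 2 * real (F i) + ((1 - sqrt 5) / 2) ^ Suc i"
proof -
  let ?u = "\<lambda>i. real (F (Suc (Suc i))) - (3 + sqrt 5) / 2 * real (F i)"
  let ?v = "\<lambda>i. ((1 - sqrt 5) / 2 :: real) ^ Suc i"
  have "?u i = ?v i"
  proof (rule fibonacci_recurrence_unique[where u = ?u and v = ?v])
    show "?u (Suc (Suc k)) = ?u (Suc k) + ?u k" for k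
      using of_nat_add[of "F (Suc k)" "F k", folded F_Suc_Suc, where 'a = real]
      by (simp add: field_simps)
    show "?v (Suc (Suc k)) = ?v (Suc k) + ?v k" for k
      by (rule power_Suc_Suc_eq_if_sq_eq[OF golden_conj_sq])
  qed (simp_all add: power2_eq_square field_simps)
  then show ?thesis by simp
qed

lemma a_le_golden:
  assumes "i \<ge> 1"
  shows "real_of_int (a i) \<le> (3 + sqrt 5) / 2 * real (F i) - real i - (1 + sqrt 5) / 2"
proof -
  define \<psi> :: real where "\<psi> = (1 - sqrt 5) / 2"
  have "\<bar>\<psi>\<bar> \<le> 1"
    using real_sqrt_less_iff[of 5 9] unfolding \<psi>_def by (simp add: abs_le_iff real_sqrt_ge_one)
  have "\<psi> ^ Suc i \<le> \<bar>\<psi>\<bar> ^ Suc i" by (metis abs_ge_self power_abs)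
  also have "\<dots> \<le> \<bar>\<psi>\<bar> ^ 2"
    using assms \<open>\<bar>\<psi>\<bar> \<le> 1\<close> by (intro power_decreasing) auto
  also have "\<bar>\<psi>\<bar> ^ 2 = (3 - sqrt 5) / 2"
    unfolding power2_abs \<psi>_def using golden_conj_sq by simp
  finally have "\<psi> ^ Suc i \<le> (3 - sqrt 5) / 2" .
  moreover have "real (F (Suc (Suc i))) = (3 + sqrt 5) / 2 * real (F i) + \<psi> ^ Suc i"
    unfolding \<psi>_def by (rule F_Suc_Suc_golden)
  moreover have "real_of_int (a i) = real (F (Suc (Suc i))) - real i - 2"
    by (simp add: a_def)
  ultimately show ?thesis by (simp add: field_simps)
qed

lemma sum_a_le_golden:
  assumes "zeckendorf_set n S"
  shows "(\<Sum>i\<in>S. real_of_int (a i))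
    \<le> (3 + sqrt 5) / 2 * real n - real (\<Sum>S) - (1 + sqrt 5) / 2 * real (card S)"
proof -
  have "(\<Sum>i\<in>S. real_of_int (a i)) \<le> (\<Sum>i\<in>S. (3 + sqrt 5) / 2 * real (F i) - real i - (1 + sqrt 5) / 2)"
    using zeckendorf_set_subset_Max[OF assms] by (intro sum_mono a_le_golden) auto
  also have "\<dots> = (3 + sqrt 5) / 2 * real (\<Sum>i\<in>S. F i) - real (\<Sum>S) - (1 + sqrt 5) / 2 * real (card S)"
    by (simp add: sum_subtractf sum_distrib_left)
  also have "\<dots> = (3 + sqrt 5) / 2 * real n - real (\<Sum>S) - (1 + sqrt 5) / 2 * real (card S)"
    using assms by (simp add: zeckendorf_set_def)
  finally show ?thesis .
qed

lemma sum_times_delta: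
  fixes f :: "nat \<Rightarrow> 'b::comm_semiring_1"
  assumes "finite A" "zeck n \<subseteq> A"
  shows "(\<Sum>i\<in>A. f i * of_nat (delta n i)) = (\<Sum>i\<in>zeck n. f i)"
proof -
  have "(\<Sum>i\<in>A. f i * of_nat (delta n i)) = (\<Sum>i\<in>A \<inter> zeck n. f i)"
    using assms(1) by (simp add: delta_def sum.inter_restrict if_distrib cong: if_cong)
  then show ?thesis using assms(2) by (simp add: Int_absorb1)
qed

theorem theorem1p2:
  fixes n :: nat and ss :: "nat multiset list"
  assumes "n \<ge> 1" and "game_path n ss"
  shows "real (length ss - 1) \<le> (\<Sum>i\<in>{1..imax n}. real_of_int (a i) * real (delta n i))
    \<and> (\<Sum>i\<in>{1..imax n}. real_of_int (a i) * real (delta n i))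
        \<le> (3 + sqrt 5) / 2 * real n - real (IZ n) - (1 + sqrt 5) / 2 * real (Z n)"
proof -
  define L where "L = last ss"
  have "ss \<noteq> []" using assms(2) by (simp add: game_path_def)
  then have inv: "int (length ss - 1) \<le> potential L" "fib_sum L = n" "0 \<notin># L"
    using game_path_invariants[OF assms(2), of "length ss - 1"] by (simp_all add: L_def last_conv_nth)
  moreover have "\<nexists>B. zmove L B" using assms(2) by (simp add: game_path_def L_def)
  ultimately have zeckendorf: "zeckendorf_set n (set_mset L)" and "potential L = (\<Sum>i\<in>set_mset L. a i)"
    using terminal_state_zeckendorf by auto
  then have "real_of_int (int (length ss - 1)) \<le> real_of_int (\<Sum>i\<in>zeck n. a i)"
    using inv(1) zeck_eqI[OF zeckendorf] by (simp only: of_int_le_iff)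
  then have length_le: "real (length ss - 1) \<le> (\<Sum>i\<in>zeck n. real_of_int (a i))"
    by simp
  have "zeck n \<subseteq> {1..imax n}"
    using zeckendorf_set_subset_Max zeckendorf zeck_eqI imax_def by metis
  then have "(\<Sum>i\<in>{1..imax n}. real_of_int (a i) * real (delta n i)) = (\<Sum>i\<in>zeck n. real_of_int (a i))"
    and "IZ n = \<Sum>(zeck n)" and "Z n = card (zeck n)"
    using sum_times_delta[of "{1..imax n}" n "\<lambda>i. real_of_int (a i)"]
      sum_times_delta[of "{1..imax n}" n "\<lambda>i. i"] sum_times_delta[of "{1..imax n}" n "\<lambda>_. 1 :: nat"]
    by (simp_all add: IZ_def Z_def)
  then show ?thesis
    using length_le sum_a_le_golden[OF zeckendorf] zeck_eqI[OF zeckendorf] by simp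
qed

end
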